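(* The class of $\curlyvee$-algebras is a proper quasivariety: it is a quasivariety but not a variety (it is not closed under homomorphic images).
   Context: A left regular band is a set with a binary operation $\sqcup$ satisfying $a\sqcup(b\sqcup c)=(a\sqcup b)\sqcup c$, $a\sqcup a=a$, $a\sqcup b=(a\sqcup b)\sqcup a$. On an algebra with operation $\sqcup$ write $a\lesssim b$ iff $b\sqcup a=b$. A $\curlyvee$-algebra is an algebra $(S,\curlyvee)$ with one binary operation such that, defining $a\sqcup b=a\curlyvee(a\curlyvee b)$ for all $a,b\in S$: $(S,\sqcup)$ is a left regular band; $\curlyvee$ is commutative and idempotent; $(a\curlyvee b)\sqcup(a\sqcup b)=a\sqcup b$; $a\sqcup(b\curlyvee c)=(a\sqcup b)\curlyvee(a\sqcup c)$; and for all $a,b,c,d$, if $d\lesssim a$, $d\lesssim b$, $d\lesssim c$, $d\lesssim a\curlyvee b$ and $d\lesssim b\curlyvee c$ then $d\lesssim a\curlyvee c$. *)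

theory Defs
  imports Main
begin

definition closed_op :: "'a set \<Rightarrow> ('a \<Rightarrow> 'a \<Rightarrow> 'a) \<Rightarrow> bool" where
  "closed_op S j \<longleftrightarrow> (\<forall>a\<in>S. \<forall>b\<in>S. j a b \<in> S)"

definition sqc :: "('a \<Rightarrow> 'a \<Rightarrow> 'a) \<Rightarrow> 'a \<Rightarrow> 'a \<Rightarrow> 'a" where
  "sqc j a b = j a (j a b)"

definition lsim :: "('a \<Rightarrow> 'a \<Rightarrow> 'a) \<Rightarrow> 'a \<Rightarrow> 'a \<Rightarrow> bool" where
  "lsim j a b \<longleftrightarrow> sqc j b a = b"

definition left_regular_band :: "'a set \<Rightarrow> ('a \<Rightarrow> 'a \<Rightarrow> 'a) \<Rightarrow> bool" where
  "left_regular_band S p \<longleftrightarrow>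
     (\<forall>a\<in>S. \<forall>b\<in>S. \<forall>c\<in>S. p a (p b c) = p (p a b) c) \<and>
     (\<forall>a\<in>S. p a a = a) \<and>
     (\<forall>a\<in>S. \<forall>b\<in>S. p a b = p (p a b) a)"

definition vee_alg :: "'a set \<Rightarrow> ('a \<Rightarrow> 'a \<Rightarrow> 'a) \<Rightarrow> bool" where
  "vee_alg S j \<longleftrightarrow>
     closed_op S j \<and>
     left_regular_band S (sqc j) \<and>
     (\<forall>a\<in>S. \<forall>b\<in>S. j a b = j b a) \<and>
     (\<forall>a\<in>S. j a a = a) \<and>
     (\<forall>a\<in>S. \<forall>b\<in>S. sqc j (j a b) (sqc j a b) = sqc j a b) \<and>
     (\<forall>a\<in>S. \<forall>b\<in>S. \<forall>c\<in>S. sqc j a (j b c) = j (sqc j a b) (sqc j a c)) \<and>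
     (\<forall>a\<in>S. \<forall>b\<in>S. \<forall>c\<in>S. \<forall>d\<in>S.
        lsim j d a \<and> lsim j d b \<and> lsim j d c \<and> lsim j d (j a b) \<and> lsim j d (j b c)
        \<longrightarrow> lsim j d (j a c))"

definition is_hom :: "'a set \<Rightarrow> ('a \<Rightarrow> 'a \<Rightarrow> 'a) \<Rightarrow> 'b set \<Rightarrow> ('b \<Rightarrow> 'b \<Rightarrow> 'b) \<Rightarrow> ('a \<Rightarrow> 'b) \<Rightarrow> bool" where
  "is_hom S j T k h \<longleftrightarrow> (\<forall>a\<in>S. h a \<in> T) \<and> (\<forall>a\<in>S. \<forall>b\<in>S. h (j a b) = k (h a) (h b))"

definition rp_rel :: "('i \<Rightarrow> 'a set) \<Rightarrow> 'i filter \<Rightarrow> (('i \<Rightarrow> 'a) \<times> ('i \<Rightarrow> 'a)) set" where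
  "rp_rel A F = {(x, y). x \<in> {x. \<forall>i. x i \<in> A i} \<and> y \<in> {x. \<forall>i. x i \<in> A i} \<and> eventually (\<lambda>i. x i = y i) F}"

definition rp_carrier :: "('i \<Rightarrow> 'a set) \<Rightarrow> 'i filter \<Rightarrow> ('i \<Rightarrow> 'a) set set" where
  "rp_carrier A F = {x. \<forall>i. x i \<in> A i} // rp_rel A F"

definition rp_op :: "('i \<Rightarrow> 'a set) \<Rightarrow> ('i \<Rightarrow> 'a \<Rightarrow> 'a \<Rightarrow> 'a) \<Rightarrow> 'i filter
    \<Rightarrow> ('i \<Rightarrow> 'a) set \<Rightarrow> ('i \<Rightarrow> 'a) set \<Rightarrow> ('i \<Rightarrow> 'a) set" where
  "rp_op A f F X Y =
     rp_rel A F `` {\<lambda>i. f i ((SOME x. x \<in> X) i) ((SOME y. y \<in> Y) i)}"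

end

theory Submission
  imports Defs "HOL-Library.Countable"
begin

text \<open>Isomorphic copies and subalgebras inherit every axiom. In a reduced product the
identities hold because they hold coordinatewise and the quotient map is a surjective
homomorphism; the quasi-identity holds because \<open>\<lesssim>\<close> between two classes means \<open>\<lesssim>\<close> on a
filter-large set of coordinates, and filters are closed under finite intersections.
Identities pass to every homomorphic image, but the quasi-identity need not: a six-element
\<open>\<curlyvee>\<close>-algebra has a four-element image in which it fails.\<close>

definition vee_identities :: "'a set \<Rightarrow> ('a \<Rightarrow> 'a \<Rightarrow> 'a) \<Rightarrow> bool" where
  "vee_identities S j \<longleftrightarrow>
     left_regular_band S (sqc j) \<and>
     (\<forall>a\<in>S. \<forall>b\<in>S. j a b = j b a) \<and>
     (\<forall>a\<in>S. j a a = a) \<and>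
     (\<forall>a\<in>S. \<forall>b\<in>S. sqc j (j a b) (sqc j a b) = sqc j a b) \<and>
     (\<forall>a\<in>S. \<forall>b\<in>S. \<forall>c\<in>S. sqc j a (j b c) = j (sqc j a b) (sqc j a c))"

definition vee_quasi_identity :: "'a set \<Rightarrow> ('a \<Rightarrow> 'a \<Rightarrow> 'a) \<Rightarrow> bool" where
  "vee_quasi_identity S j \<longleftrightarrow>
     (\<forall>a\<in>S. \<forall>b\<in>S. \<forall>c\<in>S. \<forall>d\<in>S.
        lsim j d a \<and> lsim j d b \<and> lsim j d c \<and> lsim j d (j a b) \<and> lsim j d (j b c)
        \<longrightarrow> lsim j d (j a c))"

lemma vee_alg_iff:
  "vee_alg S j \<longleftrightarrow> closed_op S j \<and> vee_identities S j \<and> vee_quasi_identity S j"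
  unfolding vee_alg_def vee_identities_def vee_quasi_identity_def by blast

lemma vee_alg_subalgebra:
  assumes "vee_alg S j" and "T \<subseteq> S" and "closed_op T j"
  shows "vee_alg T j"
  using assms unfolding vee_alg_def left_regular_band_def
  by - (elim conjE, intro conjI ballI impI; blast)

lemma hom_sqc:
  assumes "is_hom S j T k h" and "closed_op S j" and "a \<in> S" and "b \<in> S"
  shows "h (sqc j a b) = sqc k (h a) (h b)"
  using assms unfolding is_hom_def closed_op_def sqc_def by simp

lemma closed_op_hom_image:
  assumes "is_hom S j T k h" and "h ` S = T" and "closed_op S j"
  shows "closed_op T k"
proof -
  have "k (h a) (h b) \<in> T" if "a \<in> S" and "b \<in> S" for a b
    using assms(1,3) that unfolding is_hom_def closed_op_def by metis
  then show ?thesis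
    unfolding closed_op_def assms(2)[symmetric] by blast
qed

lemma vee_identities_hom_image:
  assumes hom: "is_hom S j T k h" and onto: "h ` S = T"
    and "closed_op S j" and "vee_identities S j"
  shows "vee_identities T k"
proof -
  have hj: "\<And>a b. a \<in> S \<Longrightarrow> b \<in> S \<Longrightarrow> k (h a) (h b) = h (j a b)"
    using hom unfolding is_hom_def by simp
  have hs: "\<And>a b. a \<in> S \<Longrightarrow> b \<in> S \<Longrightarrow> sqc k (h a) (h b) = h (sqc j a b)"
    using hom_sqc[OF hom \<open>closed_op S j\<close>] by simp
  have cj: "\<And>a b. a \<in> S \<Longrightarrow> b \<in> S \<Longrightarrow> j a b \<in> S"
    using \<open>closed_op S j\<close> unfolding closed_op_def by blast
  have cs: "\<And>a b. a \<in> S \<Longrightarrow> b \<in> S \<Longrightarrow> sqc j a b \<in> S"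
    unfolding sqc_def using cj by blast
  note ids = \<open>vee_identities S j\<close>[unfolded vee_identities_def left_regular_band_def]
  show ?thesis
    unfolding vee_identities_def left_regular_band_def onto[symmetric] ball_simps
    by (intro conjI ballI; simp only: hj hs cj cs; rule arg_cong[where f = h]; use ids in blast)
qed

lemma lsim_hom_iff:
  assumes hom: "is_hom S j T k h" and "inj_on h S" and "closed_op S j"
    and "a \<in> S" and "b \<in> S"
  shows "lsim k (h a) (h b) \<longleftrightarrow> lsim j a b"
proof -
  have "sqc j b a \<in> S"
    using \<open>closed_op S j\<close> \<open>a \<in> S\<close> \<open>b \<in> S\<close> unfolding closed_op_def sqc_def by blast
  then show ?thesis
    unfolding lsim_def hom_sqc[OF hom \<open>closed_op S j\<close> \<open>b \<in> S\<close> \<open>a \<in> S\<close>, symmetric]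
    using \<open>inj_on h S\<close> \<open>b \<in> S\<close> by (simp add: inj_on_eq_iff)
qed

lemma vee_quasi_identity_iso_image:
  assumes hom: "is_hom S j T k h" and bij: "bij_betw h S T"
    and "closed_op S j" and "vee_quasi_identity S j"
  shows "vee_quasi_identity T k"
proof -
  have hj: "\<And>a b. a \<in> S \<Longrightarrow> b \<in> S \<Longrightarrow> k (h a) (h b) = h (j a b)"
    using hom unfolding is_hom_def by simp
  have cj: "\<And>a b. a \<in> S \<Longrightarrow> b \<in> S \<Longrightarrow> j a b \<in> S"
    using \<open>closed_op S j\<close> unfolding closed_op_def by blast
  have hl: "\<And>a b. a \<in> S \<Longrightarrow> b \<in> S \<Longrightarrow> lsim k (h a) (h b) \<longleftrightarrow> lsim j a b"
    using lsim_hom_iff[OF hom _ \<open>closed_op S j\<close>] bij unfolding bij_betw_def by blast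
  have "T = h ` S"
    using bij unfolding bij_betw_def by simp
  note quasi = \<open>vee_quasi_identity S j\<close>[unfolded vee_quasi_identity_def]
  show ?thesis
    unfolding vee_quasi_identity_def \<open>T = h ` S\<close> ball_simps
    by (intro ballI; simp only: hj hl cj; use quasi in blast)
qed

lemma vee_alg_iso_image:
  assumes "vee_alg S j" and "is_hom S j T k h" and "bij_betw h S T"
  shows "vee_alg T k"
proof -
  have "h ` S = T"
    using \<open>bij_betw h S T\<close> by (simp add: bij_betw_def)
  then show ?thesis
    using assms closed_op_hom_image vee_identities_hom_image vee_quasi_identity_iso_image
    unfolding vee_alg_iff by metis
qed

abbreviation product_carrier :: "('i \<Rightarrow> 'a set) \<Rightarrow> ('i \<Rightarrow> 'a) set" where
  "product_carrier A \<equiv> {x. \<forall>i. x i \<in> A i}"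

definition pointwise_op :: "('i \<Rightarrow> 'a \<Rightarrow> 'a \<Rightarrow> 'a) \<Rightarrow> ('i \<Rightarrow> 'a) \<Rightarrow> ('i \<Rightarrow> 'a) \<Rightarrow> 'i \<Rightarrow> 'a" where
  "pointwise_op f x y = (\<lambda>i. f i (x i) (y i))"

lemma sqc_pointwise_op: "sqc (pointwise_op f) x y = (\<lambda>i. sqc (f i) (x i) (y i))"
  unfolding sqc_def pointwise_op_def by (rule refl)

lemma vee_identities_product:
  assumes "\<And>i. vee_identities (A i) (f i)"
  shows "vee_identities (product_carrier A) (pointwise_op f)"
  using assms unfolding vee_identities_def left_regular_band_def sqc_pointwise_op
  by (simp add: pointwise_op_def fun_eq_iff)

lemma equiv_rp_rel: "equiv (product_carrier A) (rp_rel A F)"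
  unfolding equiv_def refl_on_def sym_def trans_def rp_rel_def
  by (auto elim: eventually_mono eventually_elim2)

lemma rp_class_eq_iff:
  assumes "x \<in> product_carrier A" and "y \<in> product_carrier A"
  shows "rp_rel A F `` {x} = rp_rel A F `` {y} \<longleftrightarrow> eventually (\<lambda>i. x i = y i) F"
proof -
  have "rp_rel A F `` {x} = rp_rel A F `` {y} \<longleftrightarrow> (x, y) \<in> rp_rel A F"
    using eq_equiv_class_iff[OF equiv_rp_rel] assms by simp
  then show ?thesis
    using assms by (simp add: rp_rel_def)
qed

lemma rp_carrier_eq_image: "rp_carrier A F = (\<lambda>x. rp_rel A F `` {x}) ` product_carrier A"
  unfolding rp_carrier_def quotient_def by blast

context
  fixes A :: "'i \<Rightarrow> 'a set" and f :: "'i \<Rightarrow> 'a \<Rightarrow> 'a \<Rightarrow> 'a" and F :: "'i filter"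
  assumes closed: "\<And>i. closed_op (A i) (f i)"
begin

lemma closed_op_product: "closed_op (product_carrier A) (pointwise_op f)"
  using closed unfolding closed_op_def pointwise_op_def by simp

lemma rp_op_class:
  assumes x: "x \<in> product_carrier A" and y: "y \<in> product_carrier A"
  shows "rp_op A f F (rp_rel A F `` {x}) (rp_rel A F `` {y}) = rp_rel A F `` {pointwise_op f x y}"
proof -
  define x' where "x' = (SOME z. z \<in> rp_rel A F `` {x})"
  define y' where "y' = (SOME z. z \<in> rp_rel A F `` {y})"
  have "x' \<in> rp_rel A F `` {x}"
    using equiv_class_self[OF equiv_rp_rel[of A F] x] unfolding x'_def
    by (rule someI[where P = "\<lambda>z. z \<in> rp_rel A F `` {x}"])
  moreover have "y' \<in> rp_rel A F `` {y}"
    using equiv_class_self[OF equiv_rp_rel[of A F] y] unfolding y'_def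
    by (rule someI[where P = "\<lambda>z. z \<in> rp_rel A F `` {y}"])
  ultimately have reps: "x' \<in> product_carrier A" "y' \<in> product_carrier A"
    and "eventually (\<lambda>i. x' i = x i) F" "eventually (\<lambda>i. y' i = y i) F"
    unfolding rp_rel_def by (auto elim: eventually_mono)
  then have "eventually (\<lambda>i. pointwise_op f x' y' i = pointwise_op f x y i) F"
    unfolding pointwise_op_def by (auto elim: eventually_elim2)
  moreover have "pointwise_op f x' y' \<in> product_carrier A" "pointwise_op f x y \<in> product_carrier A"
    using closed_op_product reps x y unfolding closed_op_def by blast+
  ultimately have "rp_rel A F `` {pointwise_op f x' y'} = rp_rel A F `` {pointwise_op f x y}"
    using rp_class_eq_iff by blast
  then show ?thesis
    unfolding rp_op_def x'_def y'_def pointwise_op_def .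
qed

lemma is_hom_rp_class:
  "is_hom (product_carrier A) (pointwise_op f) (rp_carrier A F) (rp_op A f F) (\<lambda>x. rp_rel A F `` {x})"
  unfolding is_hom_def rp_carrier_eq_image using rp_op_class by simp

lemma lsim_rp_class_iff:
  assumes x: "x \<in> product_carrier A" and y: "y \<in> product_carrier A"
  shows "lsim (rp_op A f F) (rp_rel A F `` {x}) (rp_rel A F `` {y})
           \<longleftrightarrow> eventually (\<lambda>i. lsim (f i) (x i) (y i)) F"
proof -
  have "sqc (pointwise_op f) y x \<in> product_carrier A"
    using closed_op_product x y unfolding closed_op_def sqc_def by blast
  moreover have "sqc (rp_op A f F) (rp_rel A F `` {y}) (rp_rel A F `` {x})
      = rp_rel A F `` {sqc (pointwise_op f) y x}"
    using hom_sqc[OF is_hom_rp_class closed_op_product y x] by simp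
  ultimately show ?thesis
    unfolding lsim_def using rp_class_eq_iff y by (simp add: sqc_pointwise_op)
qed

lemma vee_quasi_identity_rp:
  assumes quasi: "\<And>i. vee_quasi_identity (A i) (f i)"
  shows "vee_quasi_identity (rp_carrier A F) (rp_op A f F)"
  unfolding vee_quasi_identity_def rp_carrier_eq_image Ball_image_comp comp_def
proof (intro ballI impI, elim conjE)
  fix a b c d :: "'i \<Rightarrow> 'a"
  assume mem: "a \<in> product_carrier A" "b \<in> product_carrier A"
    "c \<in> product_carrier A" "d \<in> product_carrier A"
  then have ab: "pointwise_op f a b \<in> product_carrier A"
    and bc: "pointwise_op f b c \<in> product_carrier A"
    and ac: "pointwise_op f a c \<in> product_carrier A"
    using closed_op_product unfolding closed_op_def by blast+
  have quasi_at: "\<And>i. lsim (f i) (d i) (a i) \<Longrightarrow> lsim (f i) (d i) (b i) \<Longrightarrow> lsim (f i) (d i) (c i)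
      \<Longrightarrow> lsim (f i) (d i) (f i (a i) (b i)) \<Longrightarrow> lsim (f i) (d i) (f i (b i) (c i))
      \<Longrightarrow> lsim (f i) (d i) (f i (a i) (c i))"
    using quasi mem unfolding vee_quasi_identity_def by blast
  assume "lsim (rp_op A f F) (rp_rel A F `` {d}) (rp_rel A F `` {a})"
    "lsim (rp_op A f F) (rp_rel A F `` {d}) (rp_rel A F `` {b})"
    "lsim (rp_op A f F) (rp_rel A F `` {d}) (rp_rel A F `` {c})"
    "lsim (rp_op A f F) (rp_rel A F `` {d}) (rp_op A f F (rp_rel A F `` {a}) (rp_rel A F `` {b}))"
    "lsim (rp_op A f F) (rp_rel A F `` {d}) (rp_op A f F (rp_rel A F `` {b}) (rp_rel A F `` {c}))"
  then have "eventually (\<lambda>i. lsim (f i) (d i) (a i)) F" "eventually (\<lambda>i. lsim (f i) (d i) (b i)) F"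
    "eventually (\<lambda>i. lsim (f i) (d i) (c i)) F"
    "eventually (\<lambda>i. lsim (f i) (d i) (f i (a i) (b i))) F"
    "eventually (\<lambda>i. lsim (f i) (d i) (f i (b i) (c i))) F"
    using mem ab bc by (simp_all add: lsim_rp_class_iff rp_op_class pointwise_op_def)
  then have "eventually (\<lambda>i. lsim (f i) (d i) (f i (a i) (c i))) F"
    by eventually_elim (rule quasi_at)
  then show "lsim (rp_op A f F) (rp_rel A F `` {d}) (rp_op A f F (rp_rel A F `` {a}) (rp_rel A F `` {c}))"
    using mem ac by (simp add: lsim_rp_class_iff rp_op_class pointwise_op_def)
qed

end

lemma vee_alg_reduced_product:
  assumes "\<And>i. vee_alg (A i) (f i)"
  shows "vee_alg (rp_carrier A F) (rp_op A f F)"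
proof -
  have closed: "\<And>i. closed_op (A i) (f i)"
    using assms by (simp add: vee_alg_iff)
  note hom = is_hom_rp_class[of A f F, OF closed] and onto = rp_carrier_eq_image[symmetric]
    and closed_product = closed_op_product[of A f, OF closed]
  show ?thesis
    unfolding vee_alg_iff
  proof (intro conjI)
    show "closed_op (rp_carrier A F) (rp_op A f F)"
      by (rule closed_op_hom_image[OF hom onto closed_product])
    show "vee_identities (rp_carrier A F) (rp_op A f F)"
      using assms by (intro vee_identities_hom_image[OF hom onto closed_product]
          vee_identities_product) (simp add: vee_alg_iff)
    show "vee_quasi_identity (rp_carrier A F) (rp_op A f F)"
      using assms by (intro vee_quasi_identity_rp[of A f F, OF closed]) (simp add: vee_alg_iff)
  qed
qed

definition transport_op :: "'a set \<Rightarrow> ('a \<Rightarrow> 'b) \<Rightarrow> ('a \<Rightarrow> 'a \<Rightarrow> 'a) \<Rightarrow> 'b \<Rightarrow> 'b \<Rightarrow> 'b" where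
  "transport_op S g j a b = g (j (inv_into S g a) (inv_into S g b))"

lemma is_hom_transport_op:
  assumes "inj_on g S"
  shows "is_hom S j (g ` S) (transport_op S g j) g"
  using assms unfolding is_hom_def transport_op_def by simp

lemma vee_alg_transport:
  assumes "vee_alg S j" and "inj_on g S"
  shows "vee_alg (g ` S) (transport_op S g j)"
  using vee_alg_iso_image[OF assms(1) is_hom_transport_op] assms(2)
  by (simp add: bij_betw_def)

lemma is_hom_transport_op_comp:
  assumes "inj_on g S" and "closed_op S j" and "is_hom S j T k h"
  shows "is_hom (g ` S) (transport_op S g j) T k (h \<circ> inv_into S g)"
  using assms unfolding is_hom_def closed_op_def transport_op_def by simp

datatype six = E0 | E1 | E2 | E3 | E4 | E5

instance six :: countable
  by countable_datatype

fun join6 :: "six \<Rightarrow> six \<Rightarrow> six" where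
  "join6 E0 E0 = E0" | "join6 E0 E1 = E0" | "join6 E0 E2 = E1" |
  "join6 E0 E3 = E0" | "join6 E0 E4 = E0" | "join6 E0 E5 = E1" |
  "join6 E1 E0 = E0" | "join6 E1 E1 = E1" | "join6 E1 E2 = E2" |
  "join6 E1 E3 = E0" | "join6 E1 E4 = E1" | "join6 E1 E5 = E2" |
  "join6 E2 E0 = E1" | "join6 E2 E1 = E2" | "join6 E2 E2 = E2" |
  "join6 E2 E3 = E1" | "join6 E2 E4 = E2" | "join6 E2 E5 = E2" |
  "join6 E3 E0 = E0" | "join6 E3 E1 = E0" | "join6 E3 E2 = E1" |
  "join6 E3 E3 = E3" | "join6 E3 E4 = E3" | "join6 E3 E5 = E4" |
  "join6 E4 E0 = E0" | "join6 E4 E1 = E1" | "join6 E4 E2 = E2" |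
  "join6 E4 E3 = E3" | "join6 E4 E4 = E4" | "join6 E4 E5 = E5" |
  "join6 E5 E0 = E1" | "join6 E5 E1 = E2" | "join6 E5 E2 = E2" |
  "join6 E5 E3 = E4" | "join6 E5 E4 = E5" | "join6 E5 E5 = E5"

lemma all_six: "(\<forall>x. P x) \<longleftrightarrow> P E0 \<and> P E1 \<and> P E2 \<and> P E3 \<and> P E4 \<and> P E5"
  by (metis six.exhaust)

lemma vee_alg_join6: "vee_alg UNIV join6"
  unfolding vee_alg_def left_regular_band_def closed_op_def lsim_def sqc_def ball_UNIV
  by (simp only: all_six) simp

fun collapse :: "six \<Rightarrow> nat" where
  "collapse E0 = 0" | "collapse E1 = 0" | "collapse E2 = 0" |
  "collapse E3 = 1" | "collapse E4 = 2" | "collapse E5 = 3"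

definition collapse_rep :: "nat \<Rightarrow> six" where
  "collapse_rep n = (if n = 0 then E0 else if n = 1 then E3 else if n = 2 then E4 else E5)"

definition join4 :: "nat \<Rightarrow> nat \<Rightarrow> nat" where
  "join4 a b = collapse (join6 (collapse_rep a) (collapse_rep b))"

lemma collapse_lt: "collapse x < 4"
  by (cases x) simp_all

lemma range_collapse: "range collapse = {0..<4}"
proof
  have "{0..<4} = {collapse E0, collapse E3, collapse E4, collapse E5}"
    by auto
  then show "{0..<4} \<subseteq> range collapse"
    by blast
qed (use collapse_lt in auto)

lemma is_hom_collapse: "is_hom UNIV join6 {0..<4} join4 collapse"
  unfolding is_hom_def join4_def
  using collapse_lt by (simp add: all_six collapse_rep_def)

text \<open>For \<open>d = a = E3\<close>, \<open>c = E5\<close> no single \<open>b \<in> {E0, E1, E2}\<close> meets all hypotheses of the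
quasi-identity in \<open>join6\<close>, but their common image \<open>0\<close> does in \<open>join4\<close>.\<close>

lemma not_vee_alg_join4: "\<not> vee_alg {0..<4} join4"
proof
  assume "vee_alg {0..<4} join4"
  then have "vee_quasi_identity {0..<4} join4"
    by (simp add: vee_alg_iff)
  note quasi = this[unfolded vee_quasi_identity_def, rule_format]
  have "lsim join4 1 (join4 1 3)"
    by (rule quasi[of 1 0 3 1]) (simp_all add: lsim_def sqc_def join4_def collapse_rep_def)
  then show False
    by (simp add: lsim_def sqc_def join4_def collapse_rep_def)
qed

theorem theorem3p11:
  shows
    "(\<forall>(S :: 'a set) j (T :: 'b set) k h.
        vee_alg S j \<and> closed_op T k \<and> is_hom S j T k h \<and> bij_betw h S T
        \<longrightarrow> vee_alg T k)
   \<and> (\<forall>(S :: 'a set) j T. vee_alg S j \<and> T \<subseteq> S \<and> closed_op T j \<longrightarrow> vee_alg T j)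
   \<and> (\<forall>(A :: 'i \<Rightarrow> 'a set) f (F :: 'i filter).
        (\<forall>i. vee_alg (A i) (f i)) \<longrightarrow> vee_alg (rp_carrier A F) (rp_op A f F))
   \<and> (\<exists>(S :: nat set) j (T :: nat set) k h.
        vee_alg S j \<and> closed_op T k \<and> is_hom S j T k h \<and> h ` S = T \<and> \<not> vee_alg T k)"
proof (intro conjI allI impI; (elim conjE)?)
  show "vee_alg T k" if "vee_alg S j" "is_hom S j T k h" "bij_betw h S T"
    for S :: "'a set" and j and T :: "'b set" and k h
    using vee_alg_iso_image that .
  show "vee_alg T j" if "vee_alg S j" "T \<subseteq> S" "closed_op T j" for S :: "'a set" and j T
    using vee_alg_subalgebra that .
  show "vee_alg (rp_carrier A F) (rp_op A f F)" if "\<forall>i. vee_alg (A i) (f i)"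
    for A :: "'i \<Rightarrow> 'a set" and f and F :: "'i filter"
    using vee_alg_reduced_product that by blast
  have "closed_op UNIV join6"
    using vee_alg_join6 by (simp add: vee_alg_iff)
  moreover have "(collapse \<circ> inv_into UNIV to_nat) ` range (to_nat :: six \<Rightarrow> nat) = {0..<4}"
    by (simp add: image_image inv_f_f inj_to_nat range_collapse)
  ultimately show "\<exists>(S :: nat set) j (T :: nat set) k h.
      vee_alg S j \<and> closed_op T k \<and> is_hom S j T k h \<and> h ` S = T \<and> \<not> vee_alg T k"
    using vee_alg_transport[OF vee_alg_join6 inj_to_nat]
      closed_op_hom_image[OF is_hom_collapse range_collapse]
      is_hom_transport_op_comp[OF inj_to_nat _ is_hom_collapse] not_vee_alg_join4
    by blast
qed

end
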